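(* Let $X$ and $Y$ be nonnegative random variables with distribution functions $F_X,F_Y\in\mathcal{F}$, let $s\geq1$ be an integer and $\alpha_1,\alpha_2>0$. If $X\leq_{s\text{-IFR}}Y$, then $\alpha_1X\leq_{s\text{-IFR}}\alpha_2Y$.
   Context: $\mathcal{F}$ denotes the family of distribution functions $F$ with $F(0)=0$ whose probability distribution has support contained in $[0,\infty)$. For a nonnegative random variable $X$ with density $f_X$: $\overline{T}_{X,0}=f_X$, $\widetilde{\mu}_{X,0}=1$, and for $s\geq1$, $x\geq0$, $\overline{T}_{X,s}(x)=\frac{1}{\widetilde{\mu}_{X,s-1}}\int_x^\infty \overline{T}_{X,s-1}(t)\,dt$ with $\widetilde{\mu}_{X,s}=\int_0^\infty \overline{T}_{X,s}(t)\,dt$, and $\overline{T}_{X,s}(x)=1$ for $x<0$. We write $X\leq_{s\text{-IFR}}Y$ ("$X$ is more $s$-IFR than $Y$") if $c_s(x)=\overline{T}_{Y,s}^{-1}(\overline{T}_{X,s}(x))$ is convex. *)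

theory Defs
  imports "HOL-Probability.Probability"
begin

fun Tbar :: "(real \<Rightarrow> ennreal) \<Rightarrow> nat \<Rightarrow> real \<Rightarrow> real" where
  "Tbar f 0 x = enn2real (f x)"
| "Tbar f (Suc s) x =
     (if x < 0 then 1
      else (LINT t:{x..}|lborel. Tbar f s t) /
           (if s = 0 then 1 else (LINT t:{0..}|lborel. Tbar f s t)))"

definition mu_tilde :: "(real \<Rightarrow> ennreal) \<Rightarrow> nat \<Rightarrow> real" where
  "mu_tilde f s = (if s = 0 then 1 else (LINT t:{0..}|lborel. Tbar f s t))"

lemma Tbar_Suc_mu:
  "Tbar f (Suc s) x = (if x < 0 then 1 else (LINT t:{x..}|lborel. Tbar f s t) / mu_tilde f s)"
  by (simp add: mu_tilde_def)

definition Tbar_inv :: "(real \<Rightarrow> ennreal) \<Rightarrow> nat \<Rightarrow> real \<Rightarrow> real" where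
  "Tbar_inv f s u = Inf {y. 0 \<le> y \<and> Tbar f s y \<le> u}"

text \<open>X <=_{s-IFR} Y, expressed through densities fX, fY:
  c_s(x) = T_{Y,s}^{-1}(T_{X,s}(x)) is convex (on the support [0, infinity)).\<close>
definition s_IFR_le :: "nat \<Rightarrow> (real \<Rightarrow> ennreal) \<Rightarrow> (real \<Rightarrow> ennreal) \<Rightarrow> bool" where
  "s_IFR_le s fX fY \<longleftrightarrow> convex_on {0..} (\<lambda>x. Tbar_inv fY s (Tbar fX s x))"

end

theory Submission
  imports Defs
begin

text \<open>Scaling a variable by \<open>\<alpha> > 0\<close> scales its iterated equilibrium tails:
  \<open>T\<^sub>\<alpha>\<^sub>Z\<^sub>,\<^sub>s(x) = T\<^sub>Z\<^sub>,\<^sub>s(x/\<alpha>)\<close> for \<open>s \<ge> 1\<close>, because every tail integral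
  picks up the Jacobian \<open>\<alpha>\<close>, which cancels against the normalising mean. Hence the
  generalised inverse of the tail of \<open>\<alpha>\<^sub>2Y\<close> is \<open>\<alpha>\<^sub>2\<close> times that of \<open>Y\<close>, and the
  comparison function of \<open>(\<alpha>\<^sub>1X, \<alpha>\<^sub>2Y)\<close> is \<open>x \<mapsto> \<alpha>\<^sub>2 c\<^sub>s(x/\<alpha>\<^sub>1)\<close>, convex with \<open>c\<^sub>s\<close>.
  The only subtlety is an empty infimum in the generalised inverse: it can only occur
  where the tail of \<open>X\<close> vanishes, and then continuity of that tail together with the
  convexity of \<open>c\<^sub>s\<close> forces it to vanish on all of \<open>[0, \<infinity>)\<close>, so both comparison
  functions are constant.\<close>

lemma distributed_density_total:
  fixes f :: "real \<Rightarrow> ennreal"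
  assumes "prob_space M" and "distributed M lborel Z f"
  shows "(\<integral>\<^sup>+t. f t \<partial>lborel) = 1"
  using distributed_emeasure[OF assms(2), of UNIV] assms(1)
  by (simp add: prob_space.emeasure_space_1)

lemma distributed_density_integrable:
  fixes f :: "real \<Rightarrow> ennreal"
  assumes "prob_space M" and "distributed M lborel Z f"
  shows "integrable lborel (\<lambda>t. enn2real (f t))"
proof (rule integrableI_bounded)
  show "(\<lambda>t. enn2real (f t)) \<in> borel_measurable lborel"
    using distributed_borel_measurable[OF assms(2)] by simp
  have "(\<integral>\<^sup>+t. ennreal (norm (enn2real (f t))) \<partial>lborel) \<le> (\<integral>\<^sup>+t. f t \<partial>lborel)"
    by (intro nn_integral_mono) (simp add: ennreal_enn2real_if)
  then show "(\<integral>\<^sup>+t. ennreal (norm (enn2real (f t))) \<partial>lborel) < \<infinity>"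
    using distributed_density_total[OF assms] by (auto simp: top_unique intro: le_less_trans)
qed

lemma distributed_set_integral_density:
  fixes f :: "real \<Rightarrow> ennreal"
  assumes "prob_space M" and D: "distributed M lborel Z f" and A[measurable]: "A \<in> sets borel"
  shows "(LINT t:A|lborel. enn2real (f t)) = measure M (Z -` A \<inter> space M)"
proof -
  have [measurable]: "f \<in> borel_measurable lborel"
    using D by (simp add: distributed_borel_measurable)
  have finite: "AE t in lborel. f t \<noteq> \<infinity>"
    using distributed_density_total[OF assms(1,2)] by (intro nn_integral_PInf_AE) auto
  have "(LINT t:A|lborel. enn2real (f t)) = enn2real (\<integral>\<^sup>+t. ennreal (indicator A t * enn2real (f t)) \<partial>lborel)"
    unfolding set_lebesgue_integral_def by (simp add: integral_eq_nn_integral)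
  also have "(\<integral>\<^sup>+t. ennreal (indicator A t * enn2real (f t)) \<partial>lborel) = (\<integral>\<^sup>+t. f t * indicator A t \<partial>lborel)"
    by (intro nn_integral_cong_AE, use finite in eventually_elim)
       (auto simp: indicator_def ennreal_enn2real_if top.not_eq_extremum)
  finally show ?thesis
    by (simp add: distributed_emeasure[OF D] measure_def)
qed

lemma Tbar_nonneg: "0 \<le> Tbar f k x"
proof (induction k arbitrary: x)
  case 0
  then show ?case by simp
next
  case (Suc k)
  have "0 \<le> (LINT t:A|lborel. Tbar f k t)" for A
    unfolding set_lebesgue_integral_def
    by (rule Bochner_Integration.integral_nonneg) (use Suc in \<open>auto simp: indicator_def\<close>)
  then show ?case by (auto intro!: divide_nonneg_nonneg)
qed

lemma Tbar_0_eq: "Tbar f 0 = (\<lambda>t. enn2real (f t))"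
  by (simp add: fun_eq_iff)

lemma set_integral_atLeast_rescale:
  fixes F :: "real \<Rightarrow> real"
  assumes "a > 0"
  shows "(LINT t:{x..}|lborel. F (t / a)) = a * (LINT t:{x/a..}|lborel. F t)"
proof -
  have "(LINT t:{x..}|lborel. F (t / a)) = \<bar>a\<bar> *\<^sub>R (\<integral>u. indicator {x..} (0 + a * u) *\<^sub>R F ((0 + a * u) / a) \<partial>lborel)"
    unfolding set_lebesgue_integral_def using assms by (intro lborel_integral_real_affine) simp
  also have "(\<lambda>u. indicator {x..} (0 + a * u) *\<^sub>R F ((0 + a * u) / a)) = (\<lambda>u. indicator {x/a..} u *\<^sub>R F u)"
    using assms by (auto simp: indicator_def fun_eq_iff pos_divide_le_eq mult.commute)
  finally show ?thesis
    using assms by (simp add: set_lebesgue_integral_def)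
qed

lemma Tbar_Suc_rescale:
  fixes f g :: "real \<Rightarrow> ennreal"
  assumes P: "prob_space M" and D: "distributed M lborel Z f"
    and G: "distributed M lborel (\<lambda>\<omega>. \<alpha> * Z \<omega>) g" and \<alpha>: "\<alpha> > 0"
  shows "Tbar g (Suc k) x = Tbar f (Suc k) (x / \<alpha>)"
proof (induction k arbitrary: x)
  case 0
  have [measurable]: "Z \<in> borel_measurable M"
    using distributed_measurable[OF D] by simp
  have "(\<lambda>\<omega>. \<alpha> * Z \<omega>) -` {x..} \<inter> space M = Z -` {x/\<alpha>..} \<inter> space M"
    using \<alpha> by (auto simp: pos_divide_le_eq mult.commute)
  then show ?case
    using \<alpha> distributed_set_integral_density[OF P G, of "{x..}"]
      distributed_set_integral_density[OF P D, of "{x/\<alpha>..}"]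
    by (simp add: Tbar_0_eq divide_less_0_iff)
next
  case (Suc k)
  have tail: "(LINT t:{x..}|lborel. Tbar g (Suc k) t) = \<alpha> * (LINT t:{x/\<alpha>..}|lborel. Tbar f (Suc k) t)" for x
    unfolding Suc.IH by (rule set_integral_atLeast_rescale[OF \<alpha>])
  show ?case
    using tail[of x] tail[of 0] \<alpha> unfolding Tbar_Suc_mu[of _ "Suc k"] mu_tilde_def
    by (simp add: divide_less_0_iff del: Tbar.simps)
qed

lemma mu_tilde_nonneg: "0 \<le> mu_tilde f k"
  unfolding mu_tilde_def set_lebesgue_integral_def
  by (auto intro!: Bochner_Integration.integral_nonneg simp: Tbar_nonneg)

lemma Tbar_Suc_eq_integral_diff:
  assumes int: "set_integrable lborel {0..} (Tbar f k)" and z: "0 \<le> z"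
  shows "Tbar f (Suc k) z
    = ((LINT t:{0..}|lborel. Tbar f k t) - (LINT t:{0..z}|lborel. Tbar f k t)) / mu_tilde f k"
proof -
  have "(LINT t:{0..}|lborel. Tbar f k t) = (LINT t:{0..z} \<union> {z..}|lborel. Tbar f k t)"
    using z by (intro arg_cong[where f="\<lambda>A. LINT t:A|lborel. Tbar f k t"]) auto
  also have "\<dots> = (LINT t:{0..z}|lborel. Tbar f k t) + (LINT t:{z..}|lborel. Tbar f k t)"
    using z by (intro set_integral_Un_AE set_integrable_subset[OF int])
               (auto intro: AE_mp[OF AE_lborel_singleton[of z]])
  finally show ?thesis
    using z by (simp add: Tbar_Suc_mu del: Tbar.simps)
qed

lemma Tbar_Suc_vanishes:
  fixes f :: "real \<Rightarrow> ennreal"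
  assumes "prob_space M" and "distributed M lborel Z f"
    and not_int: "\<not> set_integrable lborel {0..} (Tbar f k)" and z: "0 \<le> z"
  shows "Tbar f (Suc k) z = 0"
proof -
  have "k \<noteq> 0"
  proof
    assume "k = 0"
    then have "set_integrable lborel {0..} (Tbar f k)"
      using distributed_density_integrable[OF assms(1,2)]
      unfolding set_integrable_def Tbar_0_eq by (intro integrable_mult_indicator) auto
    with not_int show False by contradiction
  qed
  then have "mu_tilde f k = 0"
    using not_int unfolding mu_tilde_def set_integrable_def set_lebesgue_integral_def
    by (simp add: not_integrable_integral_eq)
  then show ?thesis
    using z by (simp add: Tbar_Suc_mu del: Tbar.simps)
qed

lemma Tbar_Suc_tail_form:
  fixes f :: "real \<Rightarrow> ennreal"
  assumes "prob_space M" and "distributed M lborel Z f"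
  obtains J :: "real \<Rightarrow> real" and I c
  where "continuous_on UNIV J" "mono J" "(J \<longlongrightarrow> I) at_top" "0 \<le> c"
    and "\<And>z. 0 \<le> z \<Longrightarrow> Tbar f (Suc k) z = (I - J z) / c"
proof (cases "set_integrable lborel {0..} (Tbar f k)")
  case True
  define J where "J z = (LINT t:{0..z}|lborel. Tbar f k t)" for z
  have int: "set_integrable lborel {0..b} (Tbar f k)" for b
    by (rule set_integrable_subset[OF True]) auto
  show ?thesis
  proof (rule that)
    show "continuous_on UNIV J"
      unfolding J_def by (rule continuous_on_LBINT) (rule int)
    show "mono J"
      unfolding mono_def J_def set_lebesgue_integral_def
      using int unfolding set_integrable_def
      by (auto intro!: integral_mono simp: indicator_def Tbar_nonneg)
    show "(J \<longlongrightarrow> (LINT t:{0..}|lborel. Tbar f k t)) at_top"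
      unfolding J_def by (rule tendsto_set_lebesgue_integral_at_top[OF _ True]) auto
    show "0 \<le> mu_tilde f k"
      by (rule mu_tilde_nonneg)
    show "Tbar f (Suc k) z = ((LINT t:{0..}|lborel. Tbar f k t) - J z) / mu_tilde f k" if "0 \<le> z" for z
      unfolding J_def by (rule Tbar_Suc_eq_integral_diff[OF True that])
  qed
next
  case False
  \<comment> \<open>Then \<open>mu_tilde f k = 0\<close> and the division by zero makes the tail vanish; \<open>c = 0\<close> encodes that.\<close>
  show ?thesis
    by (rule that[of "\<lambda>_. 0" 0 0]) (use Tbar_Suc_vanishes[OF assms False] in \<open>auto simp: mono_def\<close>)
qed

lemma Tbar_Suc_antimono:
  assumes "prob_space M" and "distributed M lborel Z f"
  shows "antimono_on {0..} (Tbar f (Suc k))"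
proof -
  obtain J I c where J: "mono J" and c: "0 \<le> c"
    and eq: "\<And>z. 0 \<le> z \<Longrightarrow> Tbar f (Suc k) z = (I - J z) / c"
    by (metis Tbar_Suc_tail_form[OF assms, of k])
  show ?thesis
  proof (rule monotone_onI)
    fix z1 z2 :: real assume "z1 \<in> {0..}" "z2 \<in> {0..}" "z1 \<le> z2"
    then show "Tbar f (Suc k) z2 \<le> Tbar f (Suc k) z1"
      using monoD[OF J \<open>z1 \<le> z2\<close>] c by (simp add: eq divide_right_mono del: Tbar.simps)
  qed
qed

lemma Tbar_Suc_continuous_on:
  assumes "prob_space M" and "distributed M lborel Z f"
  shows "continuous_on {0..} (Tbar f (Suc k))"
proof -
  obtain J I c where J: "continuous_on UNIV J"
    and eq: "\<And>z. 0 \<le> z \<Longrightarrow> Tbar f (Suc k) z = (I - J z) / c"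
    by (metis Tbar_Suc_tail_form[OF assms, of k])
  have "continuous_on {0..} (\<lambda>z. (I - J z) / c)"
    unfolding divide_inverse by (intro continuous_intros continuous_on_subset[OF J]) auto
  then show ?thesis
    by (rule continuous_on_cong[THEN iffD1, rotated 2]) (simp_all add: eq del: Tbar.simps)
qed

lemma Tbar_Suc_tendsto_0:
  assumes "prob_space M" and "distributed M lborel Z f"
  shows "(Tbar f (Suc k) \<longlongrightarrow> 0) at_top"
proof -
  obtain J I c where J: "(J \<longlongrightarrow> I) at_top"
    and eq: "\<And>z. 0 \<le> z \<Longrightarrow> Tbar f (Suc k) z = (I - J z) / c"
    by (metis Tbar_Suc_tail_form[OF assms, of k])
  have "((\<lambda>z. (I - J z) / c) \<longlongrightarrow> 0) at_top"
    using tendsto_mult_right[OF tendsto_diff[OF tendsto_const J], of I "inverse c"]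
    by (simp add: divide_inverse)
  then show ?thesis
    by (rule tendsto_cong[THEN iffD1, rotated])
       (auto simp: eq simp del: Tbar.simps intro: eventually_mono[OF eventually_ge_at_top[of 0]])
qed

definition gen_inverse :: "(real \<Rightarrow> real) \<Rightarrow> real \<Rightarrow> real" where
  "gen_inverse T u = Inf {y. 0 \<le> y \<and> T y \<le> u}"

lemma Tbar_inv_eq_gen_inverse: "Tbar_inv f s = gen_inverse (Tbar f s)"
  by (simp add: fun_eq_iff Tbar_inv_def gen_inverse_def)

lemma cInf_image_mult:
  fixes S :: "real set"
  assumes "0 < a" and "S \<noteq> {}" and "bdd_below S"
  shows "Inf ((\<lambda>y. a * y) ` S) = a * Inf S"
proof -
  have "mono (\<lambda>y. a * y)"
    using assms(1) by (auto simp: mono_def)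
  then show ?thesis
    using continuous_at_Inf_mono[of "\<lambda>y. a * y" S] assms(2,3) by (simp add: continuous_intros)
qed

lemma gen_inverse_rescale:
  assumes "0 < a" and "\<exists>y\<ge>0. T y \<le> u"
  shows "gen_inverse (\<lambda>y. T (y / a)) u = a * gen_inverse T u"
proof -
  have "{y. 0 \<le> y \<and> T (y / a) \<le> u} = (\<lambda>y. a * y) ` {y. 0 \<le> y \<and> T y \<le> u}"
  proof (intro set_eqI iffI)
    fix y assume "y \<in> {y. 0 \<le> y \<and> T (y / a) \<le> u}"
    then have "y / a \<in> {y. 0 \<le> y \<and> T y \<le> u}" and "y = a * (y / a)"
      using assms(1) by auto
    then show "y \<in> (\<lambda>y. a * y) ` {y. 0 \<le> y \<and> T y \<le> u}" by blast
  qed (use assms(1) in auto)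
  moreover have "bdd_below {y. 0 \<le> y \<and> T y \<le> u}"
    by (rule bdd_belowI[of _ 0]) auto
  ultimately show ?thesis
    unfolding gen_inverse_def using assms by (simp add: cInf_image_mult)
qed

lemma tendsto_0_imp_sublevel_nonempty:
  fixes T :: "real \<Rightarrow> real"
  assumes "(T \<longlongrightarrow> 0) at_top" and "0 < u"
  shows "\<exists>y\<ge>0. T y \<le> u"
proof -
  have "\<forall>\<^sub>F y in at_top. T y < u \<and> 0 \<le> y"
    using order_tendstoD(2)[OF assms] eventually_ge_at_top[of 0] by eventually_elim auto
  then show ?thesis
    unfolding eventually_at_top_linorder by (meson less_imp_le order_refl)
qed

lemma gen_inverse_lower_bound:
  assumes "antimono_on {0..} T" and "0 \<le> y0" and "u < T y0" and "\<exists>y\<ge>0. T y \<le> u"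
  shows "y0 \<le> gen_inverse T u"
  unfolding gen_inverse_def
proof (rule cInf_greatest)
  show "{y. 0 \<le> y \<and> T y \<le> u} \<noteq> {}"
    using assms(4) by auto
  fix y assume y: "y \<in> {y. 0 \<le> y \<and> T y \<le> u}"
  show "y0 \<le> y"
  proof (rule ccontr)
    assume "\<not> y0 \<le> y"
    then have "T y0 \<le> T y"
      using y by (intro monotone_onD[OF assms(1)]) auto
    with y assms(3) show False by auto
  qed
qed

lemma convex_on_cong_on:
  assumes "convex_on S g" and "\<And>x. x \<in> S \<Longrightarrow> f x = g x"
  shows "convex_on S f"
proof (rule convex_onI)
  show "convex S"
    using assms(1) by (rule convex_on_imp_convex)
  fix t :: real and x y assume "0 < t" "t < 1" "x \<in> S" "y \<in> S"
  moreover from this have "(1 - t) *\<^sub>R x + t *\<^sub>R y \<in> S"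
    using \<open>convex S\<close> by (simp add: convex_alt)
  ultimately show "f ((1 - t) *\<^sub>R x + t *\<^sub>R y) \<le> (1 - t) * f x + t * f y"
    using convex_onD[OF assms(1), of t x y] by (simp add: assms(2))
qed

lemma convex_on_nonneg_compose_divide:
  fixes c :: "real \<Rightarrow> real"
  assumes "convex_on {0..} c" and "0 < a"
  shows "convex_on {0..} (\<lambda>x. c (x / a))"
proof (rule convex_onI)
  fix t x y :: real assume "0 < t" "t < 1" "x \<in> {0..}" "y \<in> {0..}"
  then have "c ((1 - t) *\<^sub>R (x / a) + t *\<^sub>R (y / a)) \<le> (1 - t) * c (x / a) + t * c (y / a)"
    using assms by (intro convex_onD[OF assms(1)]) auto
  moreover have "((1 - t) *\<^sub>R x + t *\<^sub>R y) / a = (1 - t) *\<^sub>R (x / a) + t *\<^sub>R (y / a)"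
    by (simp add: add_divide_distrib)
  ultimately show "c (((1 - t) *\<^sub>R x + t *\<^sub>R y) / a) \<le> (1 - t) * c (x / a) + t * c (y / a)"
    by simp
qed simp

lemma convex_gen_inverse_comp_forces_zero:
  fixes T1 T2 :: "real \<Rightarrow> real"
  assumes T1: "continuous_on {0..} T1"
    and T2: "antimono_on {0..} T2" "(T2 \<longlongrightarrow> 0) at_top" "\<And>y. 0 \<le> y \<Longrightarrow> 0 < T2 y"
    and cvx: "convex_on {0..} (\<lambda>z. gen_inverse T2 (T1 z))"
    and z0: "0 \<le> z0" "T1 z0 = 0" and z1: "0 \<le> z1"
  shows "T1 z1 \<le> 0"
proof (rule ccontr)
  assume "\<not> T1 z1 \<le> 0"
  define c where "c z = gen_inverse T2 (T1 z)" for z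
  define K where "K = max (c (min z0 z1)) (c (max z0 z1))"
  have K: "c z \<le> K" if "z \<in> closed_segment z0 z1" for z
    unfolding K_def using that z0 z1
    by (intro convex_on_le_max convex_on_subset[OF cvx[folded c_def]])
       (auto simp: closed_segment_eq_real_ivl split: if_splits)
  define y0 where "y0 = max K 0 + 1"
  define \<epsilon> where "\<epsilon> = min (T2 y0 / 2) (T1 z1)"
  have "0 < T2 y0"
    using T2(3) by (simp add: y0_def)
  then have \<epsilon>: "0 < \<epsilon>" "\<epsilon> < T2 y0" "\<epsilon> \<le> T1 z1"
    using \<open>\<not> T1 z1 \<le> 0\<close> by (auto simp: \<epsilon>_def)
  have "continuous_on (closed_segment z0 z1) T1"
    using z0 z1 by (intro continuous_on_subset[OF T1] closed_segment_subset) auto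
  moreover have "\<epsilon> \<in> closed_segment (T1 z0) (T1 z1)"
    using \<epsilon> z0 by (simp add: closed_segment_eq_real_ivl)
  ultimately obtain z where z: "z \<in> closed_segment z0 z1" "T1 z = \<epsilon>"
    using IVT'_closed_segment_real by blast
  \<comment> \<open>Small positive values of \<open>T1\<close> push \<open>c\<close> beyond its convexity bound on the segment.\<close>
  have "y0 \<le> c z"
    unfolding c_def z(2)
    by (rule gen_inverse_lower_bound[OF T2(1) _ \<epsilon>(2) tendsto_0_imp_sublevel_nonempty[OF T2(2) \<epsilon>(1)]])
       (simp add: y0_def)
  with K[OF z(1)] show False
    by (simp add: y0_def)
qed

lemma convex_on_gen_inverse_comp_rescale:
  fixes T1 T2 :: "real \<Rightarrow> real"
  assumes T1: "\<And>z. 0 \<le> z \<Longrightarrow> 0 \<le> T1 z" "continuous_on {0..} T1"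
    and T2: "antimono_on {0..} T2" "(T2 \<longlongrightarrow> 0) at_top"
    and cvx: "convex_on {0..} (\<lambda>z. gen_inverse T2 (T1 z))"
    and "0 < a1" and "0 < a2"
  shows "convex_on {0..} (\<lambda>x. gen_inverse (\<lambda>y. T2 (y / a2)) (T1 (x / a1)))"
proof (cases "\<forall>z\<ge>0. \<exists>y\<ge>0. T2 y \<le> T1 z")
  case True
  have "convex_on {0..} (\<lambda>x. a2 * gen_inverse T2 (T1 (x / a1)))"
    using assms by (intro convex_on_cmul convex_on_nonneg_compose_divide[OF cvx]) auto
  then show ?thesis
    by (rule convex_on_cong_on) (use True assms in \<open>simp add: gen_inverse_rescale\<close>)
next
  case False
  \<comment> \<open>Some sublevel set is empty, where \<open>gen_inverse\<close> takes the unspecified value \<open>Inf {}\<close>.\<close>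
  then obtain z0 where z0: "0 \<le> z0" and empty: "\<And>y. 0 \<le> y \<Longrightarrow> T1 z0 < T2 y"
    by (meson not_le)
  have "T1 z0 = 0"
    using tendsto_0_imp_sublevel_nonempty[OF T2(2), of "T1 z0"] empty T1(1)[OF z0]
    by (meson le_less not_le)
  then have vanish: "T1 z = 0" if "0 \<le> z" for z
    using convex_gen_inverse_comp_forces_zero[OF T1(2) T2 _ cvx z0] empty T1(1) that
    by (metis order.antisym)
  have "convex_on {0..} (\<lambda>x::real. gen_inverse (\<lambda>y. T2 (y / a2)) 0)"
    by (simp add: convex_on_const)
  then show ?thesis
    by (rule convex_on_cong_on) (use \<open>0 < a1\<close> vanish in simp)
qed

theorem corollary1:
  fixes M :: "'a measure" and X Y :: "'a \<Rightarrow> real"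
    and fX fY :: "real \<Rightarrow> ennreal" and s :: nat and \<alpha>1 \<alpha>2 :: real
  assumes "prob_space M"
    and "distributed M lborel X fX" and "distributed M lborel Y fY"
    and "AE \<omega> in M. 0 \<le> X \<omega>" and "AE \<omega> in M. 0 \<le> Y \<omega>"
    and "measure M {\<omega> \<in> space M. X \<omega> \<le> 0} = 0"
    and "measure M {\<omega> \<in> space M. Y \<omega> \<le> 0} = 0"
    and "integrable M (\<lambda>\<omega>. X \<omega> ^ (s - 1))"
    and "integrable M (\<lambda>\<omega>. Y \<omega> ^ (s - 1))"
    and "s \<ge> 1" and "\<alpha>1 > 0" and "\<alpha>2 > 0"
    and "s_IFR_le s fX fY"
  shows "\<forall>g1 g2. distributed M lborel (\<lambda>\<omega>. \<alpha>1 * X \<omega>) g1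
            \<and> distributed M lborel (\<lambda>\<omega>. \<alpha>2 * Y \<omega>) g2 \<longrightarrow> s_IFR_le s g1 g2"
proof (intro allI impI, elim conjE)
  fix g1 g2
  assume G1: "distributed M lborel (\<lambda>\<omega>. \<alpha>1 * X \<omega>) g1"
    and G2: "distributed M lborel (\<lambda>\<omega>. \<alpha>2 * Y \<omega>) g2"
  obtain k where s: "s = Suc k"
    using \<open>s \<ge> 1\<close> by (cases s) auto
  have "Tbar g1 s = (\<lambda>x. Tbar fX s (x / \<alpha>1))" "Tbar g2 s = (\<lambda>y. Tbar fY s (y / \<alpha>2))"
    unfolding s using Tbar_Suc_rescale[OF assms(1,2) G1 \<open>\<alpha>1 > 0\<close>]
      Tbar_Suc_rescale[OF assms(1,3) G2 \<open>\<alpha>2 > 0\<close>] by auto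
  moreover have "convex_on {0..} (\<lambda>x. gen_inverse (\<lambda>y. Tbar fY s (y / \<alpha>2)) (Tbar fX s (x / \<alpha>1)))"
    unfolding s
  proof (rule convex_on_gen_inverse_comp_rescale)
    show "continuous_on {0..} (Tbar fX (Suc k))"
      using Tbar_Suc_continuous_on[OF assms(1,2)] .
    show "antimono_on {0..} (Tbar fY (Suc k))"
      using Tbar_Suc_antimono[OF assms(1,3)] .
    show "(Tbar fY (Suc k) \<longlongrightarrow> 0) at_top"
      using Tbar_Suc_tendsto_0[OF assms(1,3)] .
    show "convex_on {0..} (\<lambda>z. gen_inverse (Tbar fY (Suc k)) (Tbar fX (Suc k) z))"
      using \<open>s_IFR_le s fX fY\<close> by (simp add: s s_IFR_le_def Tbar_inv_eq_gen_inverse del: Tbar.simps)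
  qed (use \<open>\<alpha>1 > 0\<close> \<open>\<alpha>2 > 0\<close> in \<open>simp_all add: Tbar_nonneg del: Tbar.simps\<close>)
  ultimately show "s_IFR_le s g1 g2"
    by (simp add: s_IFR_le_def Tbar_inv_eq_gen_inverse del: Tbar.simps)
qed

end
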